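(* Let $\beta=(\pi_\ell)_{\ell=1}^L$ be a chainable architecture of depth $L\ge 2$. Then $\mathcal{B}^\beta\subseteq\mathcal{B}^{\beta_s}$ for every $s\in\{1,\dots,L-1\}$. Consequently, for every complex matrix $\mathbf{A}$ of appropriate size, $$E^\beta(\mathbf{A})\ge\max_{1\le s\le L-1}E^{\beta_s}(\mathbf{A}).$$
   Context: A pattern is a tuple $\pi=(a,b,c,d)$ of positive integers; $\mathbf{S}_\pi:=\mathbf{I}_a\otimes\mathbf{1}_{b\times c}\otimes\mathbf{I}_d\in\{0,1\}^{abd\times acd}$. A $\pi$-factor is a complex $abd\times acd$ matrix with support in that of $\mathbf{S}_\pi$; $\Sigma^\pi$ is the set of $\pi$-factors. Patterns $\pi=(a,b,c,d),\pi'=(a',b',c',d')$ are chainable if $ac/a'=b'd'/d$ is an integer, $a\mid a'$, $d'\mid d$; then $\pi*\pi':=(a,bd/d',a'c'/a,d')$. An architecture $\beta=(\pi_\ell)_{\ell=1}^L$ is a sequence of patterns with $a_\ell c_\ell d_\ell=a_{\ell+1}b_{\ell+1}d_{\ell+1}$, chainable if consecutive pairs are chainable; $\pi_p*\cdots*\pi_q$ is the iterated product. For an architecture $\alpha=(\pi'_\ell)_{\ell=1}^K$, $\mathcal{B}^\alpha:=\{\mathbf{X}_1\cdots\mathbf{X}_K:\mathbf{X}_\ell\in\Sigma^{\pi'_\ell}\}$ and $E^\alpha(\mathbf{A}):=\inf_{\mathbf{B}\in\mathcal{B}^\alpha}\|\mathbf{A}-\mathbf{B}\|_F$. For $s\in\{1,\dots,L-1\}$,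 $\beta_s:=(\pi_1*\cdots*\pi_s,\ \pi_{s+1}*\cdots*\pi_L)$. *)

theory Defs
  imports Complex_Main "Jordan_Normal_Form.Matrix"
begin

type_synonym pattern = "nat \<times> nat \<times> nat \<times> nat"

definition pat_pos :: "pattern \<Rightarrow> bool" where
  "pat_pos \<pi> = (case \<pi> of (a,b,c,d) \<Rightarrow> 0 < a \<and> 0 < b \<and> 0 < c \<and> 0 < d)"

definition pat_rows :: "pattern \<Rightarrow> nat" where
  "pat_rows \<pi> = (case \<pi> of (a,b,c,d) \<Rightarrow> a*b*d)"

definition pat_cols :: "pattern \<Rightarrow> nat" where
  "pat_cols \<pi> = (case \<pi> of (a,b,c,d) \<Rightarrow> a*c*d)"

text \<open>Support matrix S_pi = I_a (x) 1_{b x c} (x) I_d, entrywise (0-based indices).\<close>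
definition S_pat :: "pattern \<Rightarrow> complex mat" where
  "S_pat \<pi> = (case \<pi> of (a,b,c,d) \<Rightarrow>
     mat (a*b*d) (a*c*d) (\<lambda>(i,j). if i div (b*d) = j div (c*d) \<and> i mod d = j mod d then 1 else 0))"

definition Sigma_pat :: "pattern \<Rightarrow> complex mat set" where
  "Sigma_pat \<pi> = {X. dim_row X = pat_rows \<pi> \<and> dim_col X = pat_cols \<pi> \<and>
      (\<forall>i < pat_rows \<pi>. \<forall>j < pat_cols \<pi>. S_pat \<pi> $$ (i,j) = 0 \<longrightarrow> X $$ (i,j) = 0)}"

definition chainable_pat :: "pattern \<Rightarrow> pattern \<Rightarrow> bool" where
  "chainable_pat \<pi> \<pi>' = (case \<pi> of (a,b,c,d) \<Rightarrow> case \<pi>' of (a',b',c',d') \<Rightarrow>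
      a' dvd a*c \<and> a*c*d = b'*d'*a' \<and> a dvd a' \<and> d' dvd d)"

definition star_pat :: "pattern \<Rightarrow> pattern \<Rightarrow> pattern" where
  "star_pat \<pi> \<pi>' = (case \<pi> of (a,b,c,d) \<Rightarrow> case \<pi>' of (a',b',c',d') \<Rightarrow>
      (a, b*d div d', a'*c' div a, d'))"

fun iter_star :: "pattern list \<Rightarrow> pattern" where
  "iter_star [] = undefined"
| "iter_star (p # ps) = foldl star_pat p ps"

definition architecture :: "pattern list \<Rightarrow> bool" where
  "architecture \<beta> = (\<beta> \<noteq> [] \<and> (\<forall>\<pi>\<in>set \<beta>. pat_pos \<pi>) \<and>
      (\<forall>l. Suc l < length \<beta> \<longrightarrow> pat_cols (\<beta>!l) = pat_rows (\<beta>!Suc l)))"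

definition chainable_arch :: "pattern list \<Rightarrow> bool" where
  "chainable_arch \<beta> = (architecture \<beta> \<and>
      (\<forall>l. Suc l < length \<beta> \<longrightarrow> chainable_pat (\<beta>!l) (\<beta>!Suc l)))"

fun mat_prod_list :: "complex mat list \<Rightarrow> complex mat" where
  "mat_prod_list [] = undefined"
| "mat_prod_list [X] = X"
| "mat_prod_list (X # Xs) = X * mat_prod_list Xs"

definition B_arch :: "pattern list \<Rightarrow> complex mat set" where
  "B_arch \<alpha> = {mat_prod_list Xs | Xs. length Xs = length \<alpha> \<and>
      (\<forall>l < length \<alpha>. Xs!l \<in> Sigma_pat (\<alpha>!l))}"

definition frob_norm :: "complex mat \<Rightarrow> real" where
  "frob_norm M = sqrt (\<Sum>i<dim_row M. \<Sum>j<dim_col M. (cmod (M $$ (i,j)))^2)"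

definition E_arch :: "pattern list \<Rightarrow> complex mat \<Rightarrow> real" where
  "E_arch \<alpha> A = (INF B\<in>B_arch \<alpha>. frob_norm (A - B))"

definition beta_split :: "pattern list \<Rightarrow> nat \<Rightarrow> pattern list" where
  "beta_split \<beta> s = [iter_star (take s \<beta>), iter_star (drop s \<beta>)]"

end

theory Submission
  imports Defs
begin

(* For chainable pi and pi', the product of a pi-factor and a pi'-factor is a (pi * pi')-factor:
   entry (i,j) of XY can only be nonzero if some index k links row i to column j through the
   block structures of S_pi and S_pi', and this forces i and j into the same block of
   S_(pi * pi').  Folding this along the architecture, the product of the first s factors is a
   (pi_1 * ... * pi_s)-factor and the product of the others a (pi_(s+1) * ... * pi_L)-factor,
   so B^beta lies in B^beta_s, and an infimum over a larger set is smaller. *)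

lemma Sigma_pat_iff:
  "X \<in> Sigma_pat (a,b,c,d) \<longleftrightarrow> X \<in> carrier_mat (a*b*d) (a*c*d) \<and>
     (\<forall>i<a*b*d. \<forall>j<a*c*d. X $$ (i,j) \<noteq> 0 \<longrightarrow> i div (b*d) = j div (c*d) \<and> i mod d = j mod d)"
proof -
  have "S_pat (a,b,c,d) $$ (i,j) = 0 \<longleftrightarrow> \<not> (i div (b*d) = j div (c*d) \<and> i mod d = j mod d)"
    if "i < a*b*d" "j < a*c*d" for i j
    using that by (simp add: S_pat_def)
  then show ?thesis
    unfolding Sigma_pat_def pat_rows_def pat_cols_def carrier_mat_def by (simp del: mult_eq_0_iff) blast
qed

lemma chainable_patE:
  assumes "chainable_pat (a,b,c,d) (a',b',c',d')" "0 < a" "0 < d'"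
  obtains m e where "a' = a*m" "d = d'*e" "c*e = m*b'"
proof -
  from assms(1) have "a dvd a'" "d' dvd d" and eq: "a*c*d = b'*d'*a'"
    by (auto simp: chainable_pat_def)
  then obtain m e where a': "a' = a*m" and d: "d = d'*e" by (auto elim!: dvdE)
  have "(a*d') * (c*e) = (a*d') * (m*b')" using eq unfolding a' d by (simp add: ac_simps)
  then have "c*e = m*b'" using assms(2,3) by simp
  with a' d show thesis by (rule that)
qed

lemma star_pat_eq:
  "0 < a \<Longrightarrow> 0 < d' \<Longrightarrow> star_pat (a,b,c,d'*e) (a*m,b',c',d') = (a, b*e, m*c', d')"
  by (simp add: star_pat_def)

lemma chainable_pat_cols_eq_rows: "chainable_pat p q \<Longrightarrow> pat_cols p = pat_rows q"
  by (cases p, cases q) (simp add: chainable_pat_def pat_cols_def pat_rows_def ac_simps)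

lemma chainable_pat_star_pat:
  assumes "chainable_pat p q" "chainable_pat q r"
  shows "chainable_pat (star_pat p q) r"
proof -
  obtain a b c d a' b' c' d' a'' b'' c'' d''
    where pqr: "p = (a,b,c,d)" "q = (a',b',c',d')" "r = (a'',b'',c'',d'')"
    by (cases p, cases q, cases r)
  have "a dvd a'" using assms(1) pqr by (simp add: chainable_pat_def)
  moreover have "a'' dvd a'*c'" "a'*c'*d' = b''*d''*a''" "a' dvd a''" "d'' dvd d'"
    using assms(2) pqr by (simp_all add: chainable_pat_def)
  ultimately show ?thesis
    using pqr by (auto simp: chainable_pat_def star_pat_def dvd_mult2 intro: dvd_trans)
qed

lemma pat_pos_star_pat:
  assumes "chainable_pat p q" "pat_pos p" "pat_pos q"
  shows "pat_pos (star_pat p q)"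
proof -
  obtain a b c d a' b' c' d' where pq: "p = (a,b,c,d)" "q = (a',b',c',d')"
    by (cases p, cases q)
  have pos: "0 < a" "0 < b" "0 < c" "0 < d" "0 < a'" "0 < b'" "0 < c'" "0 < d'"
    using assms(2,3) pq by (auto simp: pat_pos_def)
  obtain m e where "a' = a*m" "d = d'*e" "c*e = m*b'"
    using assms(1) pos(1,8) pq chainable_patE by metis
  then show ?thesis using pq pos by (simp add: star_pat_eq pat_pos_def)
qed

lemma block_indices_compose:
  fixes i k j :: nat
  assumes "c*e = m*b'"
    and "i div (b*(d'*e)) = k div (c*(d'*e))" "i mod (d'*e) = k mod (d'*e)"
    and "k div (b'*d') = j div (c'*d')" "k mod d' = j mod d'"
  shows "i div (b*e*d') = j div (m*c'*d') \<and> i mod d' = j mod d'"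
proof
  have "c*(d'*e) = b'*d'*m" using assms(1) by (metis mult.commute mult.left_commute)
  then have "i div (b*e*d') = k div (b'*d'*m)"
    using assms(2) by (metis mult.commute mult.left_commute)
  also have "\<dots> = j div (c'*d') div m" by (metis div_mult2_eq assms(4))
  also have "\<dots> = j div (m*c'*d')" by (simp only: div_mult2_eq ac_simps)
  finally show "i div (b*e*d') = j div (m*c'*d')" .
  have "i mod d' = k mod d'"
    using assms(3) by (metis mod_mod_cancel dvd_triv_left)
  then show "i mod d' = j mod d'" using assms(5) by simp
qed

lemma mult_mem_Sigma_pat_star_pat:
  assumes "chainable_pat p q" "pat_pos p" "pat_pos q" "X \<in> Sigma_pat p" "Y \<in> Sigma_pat q"
  shows "X * Y \<in> Sigma_pat (star_pat p q)"
proof -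
  obtain a b c d a' b' c' d' where pq: "p = (a,b,c,d)" "q = (a',b',c',d')"
    by (cases p, cases q)
  have pos: "0 < a" "0 < d'" using assms(2,3) pq by (auto simp: pat_pos_def)
  obtain m e where a': "a' = a*m" and d: "d = d'*e" and ce: "c*e = m*b'"
    using assms(1) pos pq chainable_patE by metis
  have inner: "a*c*(d'*e) = a*m*b'*d'" using ce by (metis mult.commute mult.left_commute)
  have X: "X \<in> carrier_mat (a*b*(d'*e)) (a*m*b'*d')"
    and supp_X: "\<And>i k. i < a*b*(d'*e) \<Longrightarrow> k < a*m*b'*d' \<Longrightarrow> X $$ (i,k) \<noteq> 0 \<Longrightarrow>
      i div (b*(d'*e)) = k div (c*(d'*e)) \<and> i mod (d'*e) = k mod (d'*e)"
    using assms(4) unfolding pq d Sigma_pat_iff inner by auto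
  have Y: "Y \<in> carrier_mat (a*m*b'*d') (a*m*c'*d')"
    and supp_Y: "\<And>k j. k < a*m*b'*d' \<Longrightarrow> j < a*m*c'*d' \<Longrightarrow> Y $$ (k,j) \<noteq> 0 \<Longrightarrow>
      k div (b'*d') = j div (c'*d') \<and> k mod d' = j mod d'"
    using assms(5) unfolding pq a' Sigma_pat_iff by auto
  have "X * Y \<in> carrier_mat (a*(b*e)*d') (a*(m*c')*d')"
    using X Y by (simp add: ac_simps)
  moreover have "i div (b*e*d') = j div (m*c'*d') \<and> i mod d' = j mod d'"
    if i: "i < a*(b*e)*d'" and j: "j < a*(m*c')*d'" and XY: "(X * Y) $$ (i,j) \<noteq> 0" for i j
  proof -
    have "(X * Y) $$ (i,j) = (\<Sum>k<a*m*b'*d'. X $$ (i,k) * Y $$ (k,j))"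
      using X Y i j by (simp add: scalar_prod_def lessThan_atLeast0 ac_simps)
    then obtain k where k: "k < a*m*b'*d'" and Xik: "X $$ (i,k) \<noteq> 0" and Ykj: "Y $$ (k,j) \<noteq> 0"
      using XY by (metis (no_types, lifting) lessThan_iff mult_eq_0_iff sum.neutral)
    have i': "i < a*b*(d'*e)" and j': "j < a*m*c'*d'" using i j by (simp_all add: ac_simps)
    from supp_X[OF i' k Xik] supp_Y[OF k j' Ykj] show ?thesis
      using block_indices_compose[OF ce] by blast
  qed
  ultimately show ?thesis
    unfolding pq a' d star_pat_eq[OF pos] Sigma_pat_iff by (auto simp: ac_simps)
qed

abbreviation composable :: "'a mat list \<Rightarrow> bool" where
  "composable \<equiv> successively (\<lambda>X Y. dim_col X = dim_row Y)"

lemma mat_prod_list_Cons: "Xs \<noteq> [] \<Longrightarrow> mat_prod_list (X # Xs) = X * mat_prod_list Xs"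
  by (cases Xs) simp_all

lemma dim_row_mat_prod_list: "Xs \<noteq> [] \<Longrightarrow> dim_row (mat_prod_list Xs) = dim_row (hd Xs)"
  by (induction Xs rule: mat_prod_list.induct) simp_all

lemma dim_col_mat_prod_list: "Xs \<noteq> [] \<Longrightarrow> dim_col (mat_prod_list Xs) = dim_col (last Xs)"
  by (induction Xs rule: mat_prod_list.induct) simp_all

(* iter_star is a left fold, whereas mat_prod_list recurses on the right. *)
lemma foldl_times_eq_mat_prod_list:
  "composable (X # Xs) \<Longrightarrow> foldl (*) X Xs = mat_prod_list (X # Xs)"
proof (induction Xs arbitrary: X)
  case Nil
  then show ?case by simp
next
  case (Cons Y Ys)
  have XY: "dim_col X = dim_row Y" and "composable (Y # Ys)"
    using Cons.prems by simp_all
  then have "composable (X * Y # Ys)"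
    by (cases Ys) simp_all
  then have "foldl (*) X (Y # Ys) = mat_prod_list (X * Y # Ys)"
    by (simp add: Cons.IH)
  also have "\<dots> = mat_prod_list (X # Y # Ys)"
  proof (cases "Ys = []")
    case False
    then have "dim_row (mat_prod_list Ys) = dim_col Y"
      using \<open>composable (Y # Ys)\<close> by (cases Ys) (simp_all add: dim_row_mat_prod_list)
    then have "X * Y * mat_prod_list Ys = X * (Y * mat_prod_list Ys)"
      using XY by (intro assoc_mult_mat) (auto intro: carrier_matI)
    with False show ?thesis by (simp add: mat_prod_list_Cons)
  qed simp
  finally show ?case .
qed

lemma mat_prod_list_append:
  assumes "Xs \<noteq> []" "Ys \<noteq> []" "composable (Xs @ Ys)"
  shows "mat_prod_list (Xs @ Ys) = mat_prod_list Xs * mat_prod_list Ys"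
proof -
  obtain X Xs' where Xs: "Xs = X # Xs'" using assms(1) by (cases Xs) auto
  have "composable Xs" "composable Ys" and junction: "dim_col (last Xs) = dim_row (hd Ys)"
    using assms by (simp_all add: successively_append_iff)
  moreover have "composable (mat_prod_list Xs # Ys)"
    using assms(1,2) junction \<open>composable Ys\<close> by (cases Ys) (simp_all add: dim_col_mat_prod_list)
  ultimately have "mat_prod_list (Xs @ Ys) = foldl (*) (foldl (*) X Xs') Ys"
    and "foldl (*) X Xs' = mat_prod_list Xs"
    and "foldl (*) (mat_prod_list Xs) Ys = mat_prod_list (mat_prod_list Xs # Ys)"
    using assms(3) Xs foldl_times_eq_mat_prod_list by (metis foldl_append append_Cons)+
  then show ?thesis using assms(2) by (simp add: mat_prod_list_Cons)
qed

lemma composable_factors: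
  assumes "list_all2 (\<lambda>X p. X \<in> Sigma_pat p) Xs ps" "successively chainable_pat ps"
  shows "composable Xs"
  unfolding successively_conv_nth
proof (intro allI impI)
  fix l assume l: "Suc l < length Xs"
  have "Xs ! l \<in> Sigma_pat (ps ! l)" "Xs ! Suc l \<in> Sigma_pat (ps ! Suc l)"
    using assms(1) l by (simp_all add: list_all2_conv_all_nth)
  moreover have "pat_cols (ps ! l) = pat_rows (ps ! Suc l)"
    using assms l list_all2_lengthD successively_nth chainable_pat_cols_eq_rows by metis
  ultimately show "dim_col (Xs ! l) = dim_row (Xs ! Suc l)" by (simp add: Sigma_pat_def)
qed

lemma foldl_times_mem_Sigma_pat_foldl_star_pat:
  assumes "successively chainable_pat (p # ps)" "\<forall>q\<in>set (p # ps). pat_pos q"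
    and "X \<in> Sigma_pat p" "list_all2 (\<lambda>Y q. Y \<in> Sigma_pat q) Ys ps"
  shows "foldl (*) X Ys \<in> Sigma_pat (foldl star_pat p ps)"
  using assms
proof (induction ps arbitrary: p X Ys)
  case Nil
  then show ?case by simp
next
  case (Cons q qs)
  obtain Y Ys' where Ys: "Ys = Y # Ys'" and Y: "Y \<in> Sigma_pat q"
    and Ys': "list_all2 (\<lambda>Y q. Y \<in> Sigma_pat q) Ys' qs"
    using Cons.prems(4) by (cases Ys) auto
  have pq: "chainable_pat p q" and "successively chainable_pat (q # qs)"
    using Cons.prems(1) by simp_all
  then have "successively chainable_pat (star_pat p q # qs)"
    by (cases qs) (simp_all add: chainable_pat_star_pat)
  moreover have "\<forall>r\<in>set (star_pat p q # qs). pat_pos r"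
    using Cons.prems(2) pat_pos_star_pat[OF pq] by simp
  moreover have "X * Y \<in> Sigma_pat (star_pat p q)"
    using Cons.prems(2,3) Y by (simp add: mult_mem_Sigma_pat_star_pat pq)
  ultimately have "foldl (*) (X * Y) Ys' \<in> Sigma_pat (foldl star_pat (star_pat p q) qs)"
    using Cons.IH Ys' by blast
  then show ?case using Ys by simp
qed

lemma mat_prod_list_mem_Sigma_pat_iter_star:
  assumes "successively chainable_pat ps" "\<forall>p\<in>set ps. pat_pos p"
    and "list_all2 (\<lambda>X p. X \<in> Sigma_pat p) Xs ps" "ps \<noteq> []"
  shows "mat_prod_list Xs \<in> Sigma_pat (iter_star ps)"
proof -
  obtain p ps' X Xs' where ps: "ps = p # ps'" and Xs: "Xs = X # Xs'"
    using assms(3,4) by (cases ps; cases Xs) auto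
  have "mat_prod_list Xs = foldl (*) X Xs'"
    using composable_factors[OF assms(3,1)] Xs by (simp add: foldl_times_eq_mat_prod_list)
  also have "\<dots> \<in> Sigma_pat (foldl star_pat p ps')"
    using assms ps Xs by (intro foldl_times_mem_Sigma_pat_foldl_star_pat) simp_all
  finally show ?thesis using ps by simp
qed

lemma B_arch_eq: "B_arch \<alpha> = {mat_prod_list Xs | Xs. list_all2 (\<lambda>X p. X \<in> Sigma_pat p) Xs \<alpha>}"
  by (auto simp: B_arch_def list_all2_conv_all_nth)

lemma B_arch_subset_B_arch_beta_split:
  assumes "chainable_arch \<beta>" "0 < s" "s < length \<beta>"
  shows "B_arch \<beta> \<subseteq> B_arch (beta_split \<beta> s)"
proof
  have chain: "successively chainable_pat \<beta>" and pos: "\<forall>p\<in>set \<beta>. pat_pos p"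
    using assms(1) by (auto simp: chainable_arch_def architecture_def successively_conv_nth)
  then have chains: "successively chainable_pat (take s \<beta>)" "successively chainable_pat (drop s \<beta>)"
    using successively_append_iff[of _ "take s \<beta>" "drop s \<beta>"] by simp_all
  fix M assume "M \<in> B_arch \<beta>"
  then obtain Xs where M: "M = mat_prod_list Xs" and Xs: "list_all2 (\<lambda>X p. X \<in> Sigma_pat p) Xs \<beta>"
    by (auto simp: B_arch_eq)
  have "length Xs = length \<beta>" using Xs by (rule list_all2_lengthD)
  then have "take s Xs \<noteq> []" "drop s Xs \<noteq> []" using assms(2,3) by auto
  then have "mat_prod_list (take s Xs @ drop s Xs) = mat_prod_list (take s Xs) * mat_prod_list (drop s Xs)"
    using composable_factors[OF Xs chain] by (intro mat_prod_list_append) simp_all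
  then have "M = mat_prod_list (take s Xs) * mat_prod_list (drop s Xs)"
    using M by simp
  moreover have "mat_prod_list (take s Xs) \<in> Sigma_pat (iter_star (take s \<beta>))"
    using chains pos Xs assms
    by (intro mat_prod_list_mem_Sigma_pat_iter_star) (auto dest: in_set_takeD)
  moreover have "mat_prod_list (drop s Xs) \<in> Sigma_pat (iter_star (drop s \<beta>))"
    using chains pos Xs assms
    by (intro mat_prod_list_mem_Sigma_pat_iter_star) (auto dest: in_set_dropD)
  ultimately show "M \<in> B_arch (beta_split \<beta> s)"
    unfolding B_arch_eq beta_split_def
    by (intro CollectI exI[of _ "[mat_prod_list (take s Xs), mat_prod_list (drop s Xs)]"]) simp
qed

lemma B_arch_nonempty: "B_arch \<alpha> \<noteq> {}"
proof -
  have "list_all2 (\<lambda>X p. X \<in> Sigma_pat p) (map (\<lambda>p. 0\<^sub>m (pat_rows p) (pat_cols p)) \<alpha>) \<alpha>"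
    by (simp add: list_all2_conv_all_nth Sigma_pat_def)
  then show ?thesis by (auto simp: B_arch_eq)
qed

lemma E_arch_antimono:
  assumes "B_arch \<alpha> \<subseteq> B_arch \<alpha>'"
  shows "E_arch \<alpha>' A \<le> E_arch \<alpha> A"
  unfolding E_arch_def
proof (rule cINF_superset_mono[OF B_arch_nonempty _ assms])
  show "bdd_below ((\<lambda>B. frob_norm (A - B)) ` B_arch \<alpha>')"
    by (rule bdd_belowI[of _ 0]) (auto simp: frob_norm_def sum_nonneg)
qed simp

theorem lemma7p5:
  fixes \<beta> :: "pattern list"
  assumes "chainable_arch \<beta>" and "length \<beta> \<ge> 2"
  shows "(\<forall>s\<in>{1..length \<beta> - 1}. B_arch \<beta> \<subseteq> B_arch (beta_split \<beta> s))
    \<and> (\<forall>A :: complex mat. dim_row A = pat_rows (hd \<beta>) \<and> dim_col A = pat_cols (last \<beta>) \<longrightarrow>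
         E_arch \<beta> A \<ge> Max ((\<lambda>s. E_arch (beta_split \<beta> s) A) ` {1..length \<beta> - 1}))"
proof -
  \<comment> \<open>The inequality holds for every A.\<close>
  have subset: "\<forall>s\<in>{1..length \<beta> - 1}. B_arch \<beta> \<subseteq> B_arch (beta_split \<beta> s)"
    using assms(1) by (intro ballI B_arch_subset_B_arch_beta_split) auto
  have "{1..length \<beta> - 1} \<noteq> {}" using assms(2) by simp
  then have "E_arch \<beta> A \<ge> Max ((\<lambda>s. E_arch (beta_split \<beta> s) A) ` {1..length \<beta> - 1})" for A
    using subset E_arch_antimono by (intro Max.boundedI) auto
  with subset show ?thesis by blast
qed

end
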